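(* For every poset $(S,\le)$, the free $\mathbb{B}$-module $\mathbb{B}(S,\le)$ is flat.
   Context: $\mathbb{B}=\{-\infty,0\}$ is the Boolean semifield (idempotent semiring with $\vee=\max$); $\mathbb{B}$-modules are join-semilattices with least element. $\mathbb{B}(S,\le)$ is the set of lower subsets of $S$ which are downward closures of finite subsets, under union. A $\mathbb{B}$-module $M$ is flat if the functor $-\otimes_{\mathbb{B}}M$ is exact (preserves finite limits and finite colimits). *)

theory Defs
  imports Main
begin

section \<open>B-modules = join-semilattices with least element\<close>

record 'a bmod =
  bcar  :: "'a set"
  bjoin :: "'a \<Rightarrow> 'a \<Rightarrow> 'a"
  bzero :: 'a

definition bmodule :: "'a bmod \<Rightarrow> bool" where
  "bmodule A \<longleftrightarrow>
     bzero A \<in> bcar A \<and>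
     (\<forall>x\<in>bcar A. \<forall>y\<in>bcar A. bjoin A x y \<in> bcar A) \<and>
     (\<forall>x\<in>bcar A. \<forall>y\<in>bcar A. \<forall>z\<in>bcar A. bjoin A (bjoin A x y) z = bjoin A x (bjoin A y z)) \<and>
     (\<forall>x\<in>bcar A. \<forall>y\<in>bcar A. bjoin A x y = bjoin A y x) \<and>
     (\<forall>x\<in>bcar A. bjoin A x x = x) \<and>
     (\<forall>x\<in>bcar A. bjoin A (bzero A) x = x)"

definition bhom :: "'a bmod \<Rightarrow> 'b bmod \<Rightarrow> ('a \<Rightarrow> 'b) \<Rightarrow> bool" where
  "bhom A B f \<longleftrightarrow>
     (\<forall>x\<in>bcar A. f x \<in> bcar B) \<and>
     (\<forall>x\<in>bcar A. \<forall>y\<in>bcar A. f (bjoin A x y) = bjoin B (f x) (f y)) \<and>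
     f (bzero A) = bzero B"

definition biso :: "'a bmod \<Rightarrow> 'b bmod \<Rightarrow> ('a \<Rightarrow> 'b) \<Rightarrow> bool" where
  "biso A B f \<longleftrightarrow> bhom A B f \<and> bij_betw f (bcar A) (bcar B)"

text \<open>A \<otimes> M is the free B-module (finite subsets, union) on carrier A \<times> carrier M,
  modulo the congruence generated by bilinearity relations.\<close>

definition tgens :: "'a bmod \<Rightarrow> 'm bmod \<Rightarrow> ('a \<times> 'm) set set" where
  "tgens A M = {s. finite s \<and> s \<subseteq> bcar A \<times> bcar M}"

inductive tens_rel :: "'a bmod \<Rightarrow> 'm bmod \<Rightarrow> ('a \<times> 'm) set \<Rightarrow> ('a \<times> 'm) set \<Rightarrow> bool"
  for A M where
  trefl: "s \<in> tgens A M \<Longrightarrow> tens_rel A M s s"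
| tsym: "tens_rel A M s t \<Longrightarrow> tens_rel A M t s"
| ttrans: "tens_rel A M s t \<Longrightarrow> tens_rel A M t u \<Longrightarrow> tens_rel A M s u"
| tunion: "tens_rel A M s t \<Longrightarrow> u \<in> tgens A M \<Longrightarrow> tens_rel A M (s \<union> u) (t \<union> u)"
| tleft: "a \<in> bcar A \<Longrightarrow> a' \<in> bcar A \<Longrightarrow> m \<in> bcar M \<Longrightarrow>
           tens_rel A M {(bjoin A a a', m)} {(a, m), (a', m)}"
| tright: "a \<in> bcar A \<Longrightarrow> m \<in> bcar M \<Longrightarrow> m' \<in> bcar M \<Longrightarrow>
           tens_rel A M {(a, bjoin M m m')} {(a, m), (a, m')}"
| tzl: "m \<in> bcar M \<Longrightarrow> tens_rel A M {(bzero A, m)} {}"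
| tzr: "a \<in> bcar A \<Longrightarrow> tens_rel A M {(a, bzero M)} {}"

definition tclass :: "'a bmod \<Rightarrow> 'm bmod \<Rightarrow> ('a \<times> 'm) set \<Rightarrow> ('a \<times> 'm) set set" where
  "tclass A M s = {t. tens_rel A M s t}"

definition tensor :: "'a bmod \<Rightarrow> 'm bmod \<Rightarrow> ('a \<times> 'm) set set bmod" where
  "tensor A M = \<lparr> bcar = tclass A M ` tgens A M,
                  bjoin = (\<lambda>X Y. {u. \<exists>s\<in>X. \<exists>t\<in>Y. tens_rel A M (s \<union> t) u}),
                  bzero = tclass A M {} \<rparr>"

definition tmap :: "'b bmod \<Rightarrow> 'm bmod \<Rightarrow> ('a \<Rightarrow> 'b) \<Rightarrow> ('a \<times> 'm) set set \<Rightarrow> ('b \<times> 'm) set set" where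
  "tmap B M f X = {u. \<exists>s\<in>X. tens_rel B M (map_prod f id ` s) u}"

definition btrivial :: "'a bmod \<Rightarrow> bool" where
  "btrivial A \<longleftrightarrow> (\<exists>x. bcar A = {x})"

definition prodm :: "'a bmod \<Rightarrow> 'b bmod \<Rightarrow> ('a \<times> 'b) bmod" where
  "prodm A B = \<lparr> bcar = bcar A \<times> bcar B,
                 bjoin = (\<lambda>(x, y) (x', y'). (bjoin A x x', bjoin B y y')),
                 bzero = (bzero A, bzero B) \<rparr>"

definition eqsub :: "'a bmod \<Rightarrow> ('a \<Rightarrow> 'b) \<Rightarrow> ('a \<Rightarrow> 'b) \<Rightarrow> 'a bmod" where
  "eqsub A f g = A\<lparr> bcar := {x \<in> bcar A. f x = g x} \<rparr>"

inductive coeq_rel :: "'a bmod \<Rightarrow> 'b bmod \<Rightarrow> ('a \<Rightarrow> 'b) \<Rightarrow> ('a \<Rightarrow> 'b) \<Rightarrow> 'b \<Rightarrow> 'b \<Rightarrow> bool"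
  for A B f g where
  crefl: "b \<in> bcar B \<Longrightarrow> coeq_rel A B f g b b"
| csym: "coeq_rel A B f g x y \<Longrightarrow> coeq_rel A B f g y x"
| ctrans: "coeq_rel A B f g x y \<Longrightarrow> coeq_rel A B f g y z \<Longrightarrow> coeq_rel A B f g x z"
| cjoin: "coeq_rel A B f g x y \<Longrightarrow> z \<in> bcar B \<Longrightarrow> coeq_rel A B f g (bjoin B x z) (bjoin B y z)"
| cbase: "a \<in> bcar A \<Longrightarrow> coeq_rel A B f g (f a) (g a)"

definition coeq_proj :: "'a bmod \<Rightarrow> 'b bmod \<Rightarrow> ('a \<Rightarrow> 'b) \<Rightarrow> ('a \<Rightarrow> 'b) \<Rightarrow> 'b \<Rightarrow> 'b set" where
  "coeq_proj A B f g b = {c. coeq_rel A B f g b c}"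

definition coeq :: "'a bmod \<Rightarrow> 'b bmod \<Rightarrow> ('a \<Rightarrow> 'b) \<Rightarrow> ('a \<Rightarrow> 'b) \<Rightarrow> 'b set bmod" where
  "coeq A B f g = \<lparr> bcar = coeq_proj A B f g ` bcar B,
                    bjoin = (\<lambda>X Y. {u. \<exists>x\<in>X. \<exists>y\<in>Y. coeq_rel A B f g (bjoin B x y) u}),
                    bzero = coeq_proj A B f g (bzero B) \<rparr>"

text \<open>Zero object (= terminal = initial object) is preserved.\<close>
definition pres_zero :: "'a itself \<Rightarrow> 'm bmod \<Rightarrow> bool" where
  "pres_zero ta M \<longleftrightarrow> (\<forall>A :: 'a bmod. bmodule A \<and> btrivial A \<longrightarrow> btrivial (tensor A M))"

definition pres_products :: "'a itself \<Rightarrow> 'b itself \<Rightarrow> 'm bmod \<Rightarrow> bool" where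
  "pres_products ta tb M \<longleftrightarrow> (\<forall>(A :: 'a bmod) (B :: 'b bmod). bmodule A \<and> bmodule B \<longrightarrow>
     biso (tensor (prodm A B) M) (prodm (tensor A M) (tensor B M))
          (\<lambda>X. (tmap A M fst X, tmap B M snd X)))"

definition pres_coproducts :: "'a itself \<Rightarrow> 'b itself \<Rightarrow> 'm bmod \<Rightarrow> bool" where
  "pres_coproducts ta tb M \<longleftrightarrow> (\<forall>(A :: 'a bmod) (B :: 'b bmod). bmodule A \<and> bmodule B \<longrightarrow>
     biso (prodm (tensor A M) (tensor B M)) (tensor (prodm A B) M)
          (\<lambda>(X, Y). bjoin (tensor (prodm A B) M)
                      (tmap (prodm A B) M (\<lambda>a. (a, bzero B)) X)
                      (tmap (prodm A B) M (\<lambda>b. (bzero A, b)) Y)))"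

definition pres_equalizers :: "'a itself \<Rightarrow> 'b itself \<Rightarrow> 'm bmod \<Rightarrow> bool" where
  "pres_equalizers ta tb M \<longleftrightarrow> (\<forall>(A :: 'a bmod) (B :: 'b bmod) f g.
     bmodule A \<and> bmodule B \<and> bhom A B f \<and> bhom A B g \<longrightarrow>
     biso (tensor (eqsub A f g) M) (eqsub (tensor A M) (tmap B M f) (tmap B M g)) (tmap A M id))"

definition pres_coequalizers :: "'a itself \<Rightarrow> 'b itself \<Rightarrow> 'm bmod \<Rightarrow> bool" where
  "pres_coequalizers ta tb M \<longleftrightarrow> (\<forall>(A :: 'a bmod) (B :: 'b bmod) f g.
     bmodule A \<and> bmodule B \<and> bhom A B f \<and> bhom A B g \<longrightarrow>
     biso (coeq (tensor A M) (tensor B M) (tmap B M f) (tmap B M g))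
          (tensor (coeq A B f g) M)
          (\<lambda>Z. \<Union>X\<in>Z. tmap (coeq A B f g) M (coeq_proj A B f g) X))"

text \<open>Flatness: \<open>- \<otimes> M\<close> preserves finite limits (terminal object, binary products,
  equalizers) and finite colimits (initial object, binary coproducts, coequalizers),
  tested on B-modules whose carriers live in the types \<open>'a\<close>, \<open>'b\<close>.
  Stating the theorem for arbitrary type variables quantifies over all B-modules.\<close>
definition bflat :: "'a itself \<Rightarrow> 'b itself \<Rightarrow> 'm bmod \<Rightarrow> bool" where
  "bflat ta tb M \<longleftrightarrow> bmodule M \<and>
     pres_zero ta M \<and>
     pres_products ta tb M \<and> pres_equalizers ta tb M \<and>
     pres_coproducts ta tb M \<and> pres_coequalizers ta tb M"

definition poset_on :: "'s set \<Rightarrow> ('s \<Rightarrow> 's \<Rightarrow> bool) \<Rightarrow> bool" where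
  "poset_on S le \<longleftrightarrow> (\<forall>x\<in>S. le x x) \<and>
     (\<forall>x\<in>S. \<forall>y\<in>S. le x y \<and> le y x \<longrightarrow> x = y) \<and>
     (\<forall>x\<in>S. \<forall>y\<in>S. \<forall>z\<in>S. le x y \<and> le y z \<longrightarrow> le x z)"

definition freeB :: "'s set \<Rightarrow> ('s \<Rightarrow> 's \<Rightarrow> bool) \<Rightarrow> 's set bmod" where
  "freeB S le = \<lparr> bcar = {D. \<exists>F. finite F \<and> F \<subseteq> S \<and> D = {x \<in> S. \<exists>y\<in>F. le x y}},
                  bjoin = (\<union>), bzero = {} \<rparr>"

end

theory Submission
  imports Defs
begin

text \<open>An element of \<open>A \<otimes> \<bbbB>(S,\<le>)\<close> is represented by a finite set of pairs \<open>(a, D)\<close>, standing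
  for the join of the \<open>a \<otimes> D\<close>. Its value at a point \<open>x \<in> S\<close> is the join of all \<open>a\<close> with
  \<open>x \<in> D\<close>, and the defining relations of the tensor product preserve these values. Conversely,
  if the down-sets of the points of a finite set \<open>G\<close> generate every \<open>D\<close> that occurs, the
  representative is related to its normal form, the join of the \<open>v x \<otimes> \<down>x\<close> for \<open>x \<in> G\<close>, where
  \<open>v x\<close> is its value at \<open>x\<close>. So \<open>A \<otimes> \<bbbB>(S,\<le>)\<close> is a module of \<open>A\<close>-valued functions on \<open>S\<close>
  on which \<open>f \<otimes> \<bbbB>(S,\<le>)\<close> acts pointwise. An element equalized by \<open>f \<otimes> 1\<close> and \<open>g \<otimes> 1\<close> thus
  has all its values, hence its normal form, in the equalizer of \<open>f\<close> and \<open>g\<close>; two elements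
  identified in \<open>coeq f g \<otimes> \<bbbB>(S,\<le>)\<close> have pointwise congruent values, hence normal forms that
  are identified in the coequalizer of \<open>f \<otimes> 1\<close> and \<open>g \<otimes> 1\<close>. The zero object and binary
  biproducts are preserved by tensoring with any B-module.\<close>

lemma bmoduleD:
  assumes "bmodule A"
  shows bmodule_zero: "bzero A \<in> bcar A"
    and bmodule_join: "\<And>x y. x \<in> bcar A \<Longrightarrow> y \<in> bcar A \<Longrightarrow> bjoin A x y \<in> bcar A"
    and bmodule_assoc: "\<And>x y z. x \<in> bcar A \<Longrightarrow> y \<in> bcar A \<Longrightarrow> z \<in> bcar A \<Longrightarrow>
      bjoin A (bjoin A x y) z = bjoin A x (bjoin A y z)"
    and bmodule_comm: "\<And>x y. x \<in> bcar A \<Longrightarrow> y \<in> bcar A \<Longrightarrow> bjoin A x y = bjoin A y x"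
    and bmodule_idem: "\<And>x. x \<in> bcar A \<Longrightarrow> bjoin A x x = x"
    and bmodule_zero_left: "\<And>x. x \<in> bcar A \<Longrightarrow> bjoin A (bzero A) x = x"
    and bmodule_zero_right: "\<And>x. x \<in> bcar A \<Longrightarrow> bjoin A x (bzero A) = x"
  using assms unfolding bmodule_def by metis+

lemma bhomD:
  assumes "bhom A B h"
  shows bhom_closed: "\<And>x. x \<in> bcar A \<Longrightarrow> h x \<in> bcar B"
    and bhom_join: "\<And>x y. x \<in> bcar A \<Longrightarrow> y \<in> bcar A \<Longrightarrow> h (bjoin A x y) = bjoin B (h x) (h y)"
    and bhom_zero: "h (bzero A) = bzero B"
  using assms unfolding bhom_def by auto

text \<open>The join is made total outside the carrier, because \<open>comp_fun_idem_on\<close> asks the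
  folded functions to commute as functions on the whole type.\<close>
definition bjoin_guarded :: "'a bmod \<Rightarrow> 'a \<Rightarrow> 'a \<Rightarrow> 'a" where
  "bjoin_guarded A x z = (if x \<in> bcar A \<and> z \<in> bcar A then bjoin A x z else z)"

definition bsum :: "'a bmod \<Rightarrow> 'a set \<Rightarrow> 'a" where
  "bsum A X = Finite_Set.fold (bjoin_guarded A) (bzero A) X"

lemma comp_fun_idem_on_bjoin_guarded:
  assumes A: "bmodule A"
  shows "comp_fun_idem_on (bcar A) (bjoin_guarded A)"
proof
  fix x y assume x: "x \<in> bcar A" and y: "y \<in> bcar A"
  have "bjoin A y (bjoin A x z) = bjoin A x (bjoin A y z)" if z: "z \<in> bcar A" for z
    using bmodule_assoc[OF A y x z] bmodule_assoc[OF A x y z] bmodule_comm[OF A x y] by simp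
  then show "bjoin_guarded A y \<circ> bjoin_guarded A x = bjoin_guarded A x \<circ> bjoin_guarded A y"
    using x y by (auto simp: bjoin_guarded_def bmodule_join[OF A])
  have "bjoin A x (bjoin A x z) = bjoin A x z" if z: "z \<in> bcar A" for z
    using bmodule_assoc[OF A x x z] bmodule_idem[OF A x] by simp
  then show "bjoin_guarded A x \<circ> bjoin_guarded A x = bjoin_guarded A x"
    using x by (auto simp: bjoin_guarded_def bmodule_join[OF A])
qed

lemma bsum_empty [simp]: "bsum A {} = bzero A"
  by (simp add: bsum_def)

lemma bsum_insert_guarded:
  assumes "bmodule A" "finite X" "X \<subseteq> bcar A" "a \<in> bcar A"
  shows "bsum A (insert a X) = bjoin_guarded A a (bsum A X)"
proof -
  interpret comp_fun_idem_on "bcar A" "bjoin_guarded A"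
    by (rule comp_fun_idem_on_bjoin_guarded[OF assms(1)])
  show ?thesis
    unfolding bsum_def using assms(2-4) by (intro fold_insert_idem) auto
qed

lemma bsum_closed:
  assumes A: "bmodule A" and "finite X" "X \<subseteq> bcar A"
  shows "bsum A X \<in> bcar A"
  using assms(2,3)
proof (induction X rule: finite_induct)
  case empty
  then show ?case by (simp add: bmodule_zero[OF A])
next
  case (insert x F)
  then show ?case
    by (simp add: bsum_insert_guarded[OF A] bjoin_guarded_def bmodule_join[OF A])
qed

lemma bsum_insert:
  assumes "bmodule A" "finite X" "X \<subseteq> bcar A" "a \<in> bcar A"
  shows "bsum A (insert a X) = bjoin A a (bsum A X)"
  using assms by (simp add: bsum_insert_guarded bjoin_guarded_def bsum_closed)

lemma bsum_singleton: "bmodule A \<Longrightarrow> a \<in> bcar A \<Longrightarrow> bsum A {a} = a"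
  using bsum_insert[of A "{}" a] by (simp add: bmodule_zero_right)

lemma bsum_absorb:
  assumes "bmodule A" "finite X" "X \<subseteq> bcar A" "a \<in> X"
  shows "bjoin A a (bsum A X) = bsum A X"
  using bsum_insert[OF assms(1-3)] assms(3,4) by (metis insert_absorb subsetD)

lemma bsum_union:
  assumes A: "bmodule A" and X: "finite X" "X \<subseteq> bcar A" and Y: "finite Y" "Y \<subseteq> bcar A"
  shows "bsum A (X \<union> Y) = bjoin A (bsum A X) (bsum A Y)"
  using X
proof (induction X rule: finite_induct)
  case empty
  then show ?case using Y by (simp add: bmodule_zero_left[OF A] bsum_closed[OF A])
next
  case (insert x F)
  then have "bsum A (insert x F \<union> Y) = bjoin A x (bjoin A (bsum A F) (bsum A Y))"
    using Y by (simp add: bsum_insert[OF A])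
  also have "\<dots> = bjoin A (bsum A (insert x F)) (bsum A Y)"
    using insert Y by (simp add: bsum_insert[OF A] bmodule_assoc[OF A] bsum_closed[OF A])
  finally show ?case .
qed

lemma bsum_bhom:
  assumes A: "bmodule A" and B: "bmodule B" and h: "bhom A B h" and "finite X" "X \<subseteq> bcar A"
  shows "h (bsum A X) = bsum B (h ` X)"
  using assms(4,5)
proof (induction X rule: finite_induct)
  case empty
  then show ?case by (simp add: bhom_zero[OF h])
next
  case (insert x F)
  then have "h ` F \<subseteq> bcar B" "h x \<in> bcar B"
    using bhom_closed[OF h] by auto
  with insert show ?case
    by (simp add: bsum_insert[OF A] bsum_insert[OF B] bhom_join[OF h] bsum_closed[OF A])
qed

lemma tgens_iff: "s \<in> tgens A M \<longleftrightarrow> finite s \<and> s \<subseteq> bcar A \<times> bcar M"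
  by (simp add: tgens_def)

lemma tgensD: "s \<in> tgens A M \<Longrightarrow> finite s" "s \<in> tgens A M \<Longrightarrow> s \<subseteq> bcar A \<times> bcar M"
  by (simp_all add: tgens_def)

lemma tgens_empty [simp]: "{} \<in> tgens A M"
  by (simp add: tgens_def)

lemma tgens_Un: "s \<in> tgens A M \<Longrightarrow> t \<in> tgens A M \<Longrightarrow> s \<union> t \<in> tgens A M"
  by (simp add: tgens_def)

lemma tgens_singleton [simp]: "{(a, m)} \<in> tgens A M \<longleftrightarrow> a \<in> bcar A \<and> m \<in> bcar M"
  by (simp add: tgens_def)

lemma tens_rel_tgens:
  assumes A: "bmodule A" and M: "bmodule M"
  shows "tens_rel A M s t \<Longrightarrow> s \<in> tgens A M \<and> t \<in> tgens A M"
  by (induction rule: tens_rel.induct)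
    (auto simp: tgens_Un tgens_iff bmodule_join[OF A] bmodule_join[OF M]
      bmodule_zero[OF A] bmodule_zero[OF M])

lemma tens_rel_Un:
  assumes A: "bmodule A" and M: "bmodule M"
    and "tens_rel A M s s'" "tens_rel A M t t'"
  shows "tens_rel A M (s \<union> t) (s' \<union> t')"
proof -
  have "tens_rel A M (s \<union> t) (s' \<union> t)"
    using assms(3,4) tens_rel_tgens[OF A M] by (blast intro: tunion)
  moreover have "tens_rel A M (t \<union> s') (t' \<union> s')"
    using assms(3,4) tens_rel_tgens[OF A M] by (blast intro: tunion)
  ultimately show ?thesis
    by (auto simp: Un_commute intro: ttrans)
qed

lemma tens_rel_UN:
  assumes A: "bmodule A" and M: "bmodule M"
    and "finite s" "\<And>e. e \<in> s \<Longrightarrow> tens_rel A M {e} (r e)"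
  shows "tens_rel A M s (\<Union>e\<in>s. r e)"
  using assms(3,4)
proof (induction s rule: finite_induct)
  case (insert e F)
  then have "tens_rel A M ({e} \<union> F) (r e \<union> (\<Union>e\<in>F. r e))"
    by (intro tens_rel_Un[OF A M]) auto
  then show ?case by simp
qed (simp add: trefl)

lemma tens_rel_absorb:
  assumes A: "bmodule A" and M: "bmodule M"
    and "finite s" "N \<in> tgens A M" "\<And>e. e \<in> s \<Longrightarrow> tens_rel A M (insert e N) N"
  shows "tens_rel A M (s \<union> N) N"
  using assms(3,5)
proof (induction s rule: finite_induct)
  case empty
  then show ?case using assms(4) by (simp add: trefl)
next
  case (insert e F)
  have e: "tens_rel A M (insert e N) N" using insert.prems by simp
  then have "{e} \<in> tgens A M"
    using tens_rel_tgens[OF A M] by (auto simp: tgens_iff)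
  then have "tens_rel A M ({e} \<union> (F \<union> N)) ({e} \<union> N)"
    using insert by (intro tens_rel_Un[OF A M] trefl) auto
  then show ?case using e by (auto intro: ttrans)
qed

lemma tens_rel_antisym:
  assumes "tens_rel A M (s \<union> t) t" "tens_rel A M (t \<union> s) s"
  shows "tens_rel A M s t"
  using assms by (simp add: Un_commute) (blast intro: tsym ttrans)

lemma tens_rel_insert_below_left:
  assumes A: "bmodule A" and M: "bmodule M" and s: "s \<in> tgens A M"
    and "(a, m) \<in> s" "a' \<in> bcar A" "bjoin A a' a = a"
  shows "tens_rel A M (insert (a', m) s) s"
proof -
  have "a \<in> bcar A" "m \<in> bcar M" using s assms(4) by (auto simp: tgens_iff)
  then have "tens_rel A M ({(bjoin A a' a, m)} \<union> s) ({(a', m), (a, m)} \<union> s)"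
    using assms(5) s by (intro tunion tleft)
  then show ?thesis
    using assms(4,6) by (simp add: insert_absorb tsym)
qed

lemma tens_rel_insert_below_right:
  assumes A: "bmodule A" and M: "bmodule M" and s: "s \<in> tgens A M"
    and "(a, m) \<in> s" "m' \<in> bcar M" "bjoin M m' m = m"
  shows "tens_rel A M (insert (a, m') s) s"
proof -
  have "a \<in> bcar A" "m \<in> bcar M" using s assms(4) by (auto simp: tgens_iff)
  then have "tens_rel A M ({(a, bjoin M m' m)} \<union> s) ({(a, m'), (a, m)} \<union> s)"
    using assms(5) s by (intro tunion tright)
  then show ?thesis
    using assms(4,6) by (simp add: insert_absorb tsym)
qed

lemma tens_rel_bsum_left:
  assumes A: "bmodule A" and M: "bmodule M" and m: "m \<in> bcar M"
    and "finite X" "X \<subseteq> bcar A"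
  shows "tens_rel A M {(bsum A X, m)} ((\<lambda>a. (a, m)) ` X)"
  using assms(4,5)
proof (induction X rule: finite_induct)
  case empty
  then show ?case using tzl[OF m] by simp
next
  case (insert a X)
  then have "tens_rel A M {(bsum A (insert a X), m)} ({(a, m)} \<union> {(bsum A X, m)})"
    using tleft[OF _ bsum_closed[OF A] m] by (simp add: bsum_insert[OF A] insert_commute)
  moreover have "tens_rel A M ({(a, m)} \<union> {(bsum A X, m)}) ({(a, m)} \<union> (\<lambda>a. (a, m)) ` X)"
    using insert m by (intro tens_rel_Un[OF A M] trefl) auto
  ultimately show ?case by (auto intro: ttrans)
qed

lemma self_in_tclass: "s \<in> tgens A M \<Longrightarrow> s \<in> tclass A M s"
  by (simp add: tclass_def trefl)

lemma tclass_eqI: "tens_rel A M s t \<Longrightarrow> tclass A M s = tclass A M t"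
  unfolding tclass_def by (auto intro: ttrans tsym)

lemma tclass_eq_iff:
  assumes "t \<in> tgens A M"
  shows "tclass A M s = tclass A M t \<longleftrightarrow> tens_rel A M s t"
proof
  assume "tclass A M s = tclass A M t"
  then show "tens_rel A M s t"
    using self_in_tclass[OF assms] unfolding tclass_def by blast
qed (rule tclass_eqI)

lemma tensor_carrier: "bcar (tensor A M) = tclass A M ` tgens A M"
  by (simp add: tensor_def)

lemma tensor_zero: "bzero (tensor A M) = tclass A M {}"
  by (simp add: tensor_def)

lemma tensor_join:
  assumes A: "bmodule A" and M: "bmodule M" and "s \<in> tgens A M" "t \<in> tgens A M"
  shows "bjoin (tensor A M) (tclass A M s) (tclass A M t) = tclass A M (s \<union> t)"
proof -
  have "tens_rel A M (s \<union> t) u \<longleftrightarrow> (\<exists>s'\<in>tclass A M s. \<exists>t'\<in>tclass A M t. tens_rel A M (s' \<union> t') u)"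
    for u
  proof
    assume "tens_rel A M (s \<union> t) u"
    then show "\<exists>s'\<in>tclass A M s. \<exists>t'\<in>tclass A M t. tens_rel A M (s' \<union> t') u"
      using self_in_tclass assms(3,4) by blast
  next
    assume "\<exists>s'\<in>tclass A M s. \<exists>t'\<in>tclass A M t. tens_rel A M (s' \<union> t') u"
    then obtain s' t' where "tens_rel A M s s'" "tens_rel A M t t'" "tens_rel A M (s' \<union> t') u"
      by (auto simp: tclass_def)
    then show "tens_rel A M (s \<union> t) u"
      using tens_rel_Un[OF A M] ttrans by blast
  qed
  then show ?thesis
    by (simp add: tensor_def tclass_def)
qed

lemma bmodule_tensor:
  assumes A: "bmodule A" and M: "bmodule M"
  shows "bmodule (tensor A M)"
  unfolding bmodule_def tensor_carrier tensor_zero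
  by (intro conjI ballI) (auto simp: tensor_join[OF A M] tgens_Un Un_ac)

definition lmap :: "('a \<Rightarrow> 'b) \<Rightarrow> ('a \<times> 'm) set \<Rightarrow> ('b \<times> 'm) set" where
  "lmap h s = map_prod h id ` s"

lemma lmap_simps [simp]:
  "lmap h {} = {}"
  "lmap h (s \<union> t) = lmap h s \<union> lmap h t"
  "lmap h (insert (a, m) s) = insert (h a, m) (lmap h s)"
  "lmap id s = s"
  by (auto simp: lmap_def map_prod.id)

lemma lmap_tgens: "bhom A B h \<Longrightarrow> s \<in> tgens A M \<Longrightarrow> lmap h s \<in> tgens B M"
  by (auto simp: tgens_def lmap_def bhom_def)

lemma tens_rel_lmap:
  assumes h: "bhom A B h"
  shows "tens_rel A M s t \<Longrightarrow> tens_rel B M (lmap h s) (lmap h t)"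
proof (induction rule: tens_rel.induct)
  case (trefl s)
  then show ?case by (intro tens_rel.trefl lmap_tgens[OF h])
next
  case (tsym s t)
  from tsym.IH show ?case by (rule tens_rel.tsym)
next
  case (ttrans s t u)
  from ttrans.IH show ?case by (rule tens_rel.ttrans)
next
  case (tunion s t u)
  then show ?case by (simp add: tens_rel.tunion lmap_tgens[OF h])
qed (simp_all add: bhomD[OF h] tens_rel.intros)

lemma tmap_tclass:
  assumes h: "bhom A B h" and s: "s \<in> tgens A M"
  shows "tmap B M h (tclass A M s) = tclass B M (lmap h s)"
  using tens_rel_lmap[OF h] self_in_tclass[OF s]
  by (auto simp: tmap_def lmap_def tclass_def intro: ttrans)

lemma bhom_tmap:
  assumes A: "bmodule A" and B: "bmodule B" and M: "bmodule M" and h: "bhom A B h"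
  shows "bhom (tensor A M) (tensor B M) (tmap B M h)"
  unfolding bhom_def
  by (auto simp: tensor_carrier tensor_zero tmap_tclass[OF h] lmap_tgens[OF h]
      tensor_join[OF A M] tensor_join[OF B M] tgens_Un)

section \<open>Tensoring with the free module on a poset\<close>

definition downset :: "'s set \<Rightarrow> ('s \<Rightarrow> 's \<Rightarrow> bool) \<Rightarrow> 's set \<Rightarrow> 's set" where
  "downset S le H = {x \<in> S. \<exists>y\<in>H. le x y}"

abbreviation pdown :: "'s set \<Rightarrow> ('s \<Rightarrow> 's \<Rightarrow> bool) \<Rightarrow> 's \<Rightarrow> 's set" where
  "pdown S le x \<equiv> downset S le {x}"

lemma freeB_simps [simp]:
  "bjoin (freeB S le) = (\<union>)"
  "bzero (freeB S le) = {}"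
  by (simp_all add: freeB_def)

lemma in_freeB_iff: "D \<in> bcar (freeB S le) \<longleftrightarrow> (\<exists>H. finite H \<and> H \<subseteq> S \<and> D = downset S le H)"
  by (simp add: freeB_def downset_def)

lemma downset_Un: "downset S le (H \<union> K) = downset S le H \<union> downset S le K"
  by (auto simp: downset_def)

lemma downset_in_freeB: "finite H \<Longrightarrow> H \<subseteq> S \<Longrightarrow> downset S le H \<in> bcar (freeB S le)"
  unfolding in_freeB_iff by blast

lemma pdown_in_freeB: "x \<in> S \<Longrightarrow> pdown S le x \<in> bcar (freeB S le)"
  by (rule downset_in_freeB) auto

lemma bmodule_freeB: "bmodule (freeB S le)"
proof -
  have "D \<union> D' \<in> bcar (freeB S le)" if "D \<in> bcar (freeB S le)" "D' \<in> bcar (freeB S le)" for D D'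
  proof -
    from that(1) obtain H where "finite H" "H \<subseteq> S" "D = downset S le H"
      by (auto simp only: in_freeB_iff)
    moreover from that(2) obtain H' where "finite H'" "H' \<subseteq> S" "D' = downset S le H'"
      by (auto simp only: in_freeB_iff)
    ultimately
    show ?thesis
      using downset_in_freeB[of "H \<union> H'" S le] by (simp add: downset_Un)
  qed
  moreover have "{} \<in> bcar (freeB S le)"
    using downset_in_freeB[of "{}" S le] by (simp add: downset_def)
  ultimately show ?thesis
    unfolding bmodule_def by (simp add: Un_ac)
qed

lemma pdown_subset:
  assumes le: "poset_on S le" and D: "D \<in> bcar (freeB S le)" and x: "x \<in> D"
  shows "pdown S le x \<subseteq> D"
proof
  fix y assume "y \<in> pdown S le x"
  then have y: "y \<in> S" "le y x"
    by (auto simp: downset_def)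
  from D obtain H where H: "H \<subseteq> S" "D = downset S le H"
    by (auto simp only: in_freeB_iff)
  with x obtain z where z: "z \<in> H" "le x z" "x \<in> S"
    by (auto simp: downset_def)
  have "le y z"
    using le y z H(1) unfolding poset_on_def by blast
  then show "y \<in> D"
    using y z H by (auto simp: downset_def)
qed

definition coeffs :: "('a \<times> 's set) set \<Rightarrow> 's \<Rightarrow> 'a set" where
  "coeffs s x = fst ` {p \<in> s. x \<in> snd p}"

definition tval :: "'a bmod \<Rightarrow> ('a \<times> 's set) set \<Rightarrow> 's \<Rightarrow> 'a" where
  "tval A s x = bsum A (coeffs s x)"

lemma coeffs_simps:
  "coeffs {} x = {}"
  "coeffs (insert (a, D) s) x = (if x \<in> D then insert a (coeffs s x) else coeffs s x)"
  "coeffs (s \<union> t) x = coeffs s x \<union> coeffs t x"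
  by (auto simp: coeffs_def image_iff)

lemma coeffs_lmap: "coeffs (lmap h s) x = h ` coeffs s x"
  by (force simp: coeffs_def lmap_def image_iff)

lemma coeffs_tgens:
  assumes "s \<in> tgens A M"
  shows "finite (coeffs s x)" "coeffs s x \<subseteq> bcar A"
  using assms by (auto simp: coeffs_def tgens_iff)

lemma tval_closed: "bmodule A \<Longrightarrow> s \<in> tgens A M \<Longrightarrow> tval A s x \<in> bcar A"
  unfolding tval_def by (rule bsum_closed[OF _ coeffs_tgens])

lemma tval_lmap:
  assumes "bmodule A" "bmodule B" "bhom A B h" "s \<in> tgens A M"
  shows "tval B (lmap h s) x = h (tval A s x)"
  unfolding tval_def coeffs_lmap using bsum_bhom[OF assms(1-3) coeffs_tgens[OF assms(4)]] by simp

lemma tens_rel_tval: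
  assumes A: "bmodule A"
  shows "tens_rel A (freeB S le) s t \<Longrightarrow> tval A s x = tval A t x"
proof (induction rule: tens_rel.induct)
  case (tunion s t u)
  then have "s \<in> tgens A (freeB S le)" "t \<in> tgens A (freeB S le)"
    using tens_rel_tgens[OF A bmodule_freeB] by auto
  with tunion show ?case
    unfolding tval_def coeffs_simps
    by (simp add: bsum_union[OF A] coeffs_tgens)
next
  case (tleft a a' m)
  then show ?case
    by (simp add: tval_def coeffs_simps bsum_singleton[OF A] bsum_insert[OF A] bmodule_join[OF A]
        bmodule_zero_right[OF A])
next
  case (tzl m)
  then show ?case
    by (simp add: tval_def coeffs_simps bsum_singleton[OF A] bmodule_zero[OF A])
qed (auto simp: tval_def coeffs_simps)

definition covers :: "'s set \<Rightarrow> ('s \<Rightarrow> 's \<Rightarrow> bool) \<Rightarrow> 's set \<Rightarrow> ('a \<times> 's set) set \<Rightarrow> bool" where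
  "covers S le G s \<longleftrightarrow> (\<forall>p\<in>s. \<exists>H\<subseteq>G. snd p = downset S le H)"

definition normal_form :: "'s set \<Rightarrow> ('s \<Rightarrow> 's \<Rightarrow> bool) \<Rightarrow> 's set \<Rightarrow> ('s \<Rightarrow> 'a) \<Rightarrow> ('a \<times> 's set) set" where
  "normal_form S le G v = (\<lambda>x. (v x, pdown S le x)) ` G"

lemma covers_Un: "covers S le G (s \<union> t) \<longleftrightarrow> covers S le G s \<and> covers S le G t"
  by (auto simp: covers_def)

lemma covers_exists:
  assumes "s \<in> tgens A (freeB S le)"
  shows "\<exists>G. finite G \<and> G \<subseteq> S \<and> covers S le G s"
proof -
  have "\<forall>p\<in>s. \<exists>H. finite H \<and> H \<subseteq> S \<and> snd p = downset S le H"
    using assms by (auto simp: tgens_iff in_freeB_iff)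
  then obtain H where H: "\<And>p. p \<in> s \<Longrightarrow> finite (H p) \<and> H p \<subseteq> S \<and> snd p = downset S le (H p)"
    by metis
  then have "covers S le (\<Union>(H ` s)) s"
    unfolding covers_def by blast
  moreover have "finite (\<Union>(H ` s))" "\<Union>(H ` s) \<subseteq> S"
    using H assms by (auto simp: tgens_iff)
  ultimately show ?thesis by blast
qed

lemma normal_form_tgens:
  assumes "finite G" "G \<subseteq> S" "\<And>x. x \<in> G \<Longrightarrow> v x \<in> bcar A"
  shows "normal_form S le G v \<in> tgens A (freeB S le)"
  using assms pdown_in_freeB[of _ S le] by (auto simp: normal_form_def tgens_iff)

lemma tens_rel_downset_right:
  assumes A: "bmodule A" and a: "a \<in> bcar A" and "finite H" "H \<subseteq> S"
  shows "tens_rel A (freeB S le) {(a, downset S le H)} ((\<lambda>h. (a, pdown S le h)) ` H)"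
  using assms(3,4)
proof (induction H rule: finite_induct)
  case empty
  then show ?case using tzr[OF a, of "freeB S le"] by (simp add: downset_def)
next
  case (insert h H)
  then have "tens_rel A (freeB S le) {(a, pdown S le h \<union> downset S le H)}
      {(a, pdown S le h), (a, downset S le H)}"
    using tright[OF a pdown_in_freeB[of h S le] downset_in_freeB[of H S le]] by simp
  then have "tens_rel A (freeB S le) {(a, downset S le (insert h H))}
      {(a, pdown S le h), (a, downset S le H)}"
    using downset_Un[of S le "{h}" H] by simp
  moreover have "tens_rel A (freeB S le) ({(a, pdown S le h)} \<union> {(a, downset S le H)})
      ({(a, pdown S le h)} \<union> (\<lambda>h. (a, pdown S le h)) ` H)"
    using insert a pdown_in_freeB[of h S le]
    by (intro tens_rel_Un[OF A bmodule_freeB] trefl) auto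
  then have "tens_rel A (freeB S le) {(a, pdown S le h), (a, downset S le H)}
      ((\<lambda>h. (a, pdown S le h)) ` insert h H)"
    by (simp add: insert_commute)
  ultimately show ?case by (auto intro: ttrans)
qed

lemma tens_rel_insert_value:
  assumes le: "poset_on S le" and A: "bmodule A"
    and s: "s \<in> tgens A (freeB S le)" and x: "x \<in> S"
  shows "tens_rel A (freeB S le) (insert (tval A s x, pdown S le x) s) s"
proof -
  let ?X = "(\<lambda>a. (a, pdown S le x)) ` coeffs s x"
  have "tens_rel A (freeB S le) ({(tval A s x, pdown S le x)} \<union> s) (?X \<union> s)"
    unfolding tval_def
    by (intro tens_rel_Un[OF A bmodule_freeB] tens_rel_bsum_left[OF A bmodule_freeB]
        pdown_in_freeB[OF x] coeffs_tgens[OF s] trefl[OF s])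
  moreover have "tens_rel A (freeB S le) (?X \<union> s) s"
  proof (rule tens_rel_absorb[OF A bmodule_freeB _ s])
    show "finite ?X" using coeffs_tgens[OF s] by simp
  next
    fix e assume "e \<in> ?X"
    then obtain a D where aD: "(a, D) \<in> s" "x \<in> D" "e = (a, pdown S le x)"
      by (auto simp: coeffs_def)
    then have "D \<in> bcar (freeB S le)" using s by (auto simp: tgens_iff)
    then have "pdown S le x \<union> D = D" using pdown_subset[OF le _ aD(2)] by blast
    then show "tens_rel A (freeB S le) (insert e s) s"
      using tens_rel_insert_below_right[OF A bmodule_freeB s aD(1) pdown_in_freeB[OF x]] aD(3)
      by simp
  qed
  ultimately show ?thesis by (auto intro: ttrans)
qed

lemma tens_rel_insert_generator:
  assumes le: "poset_on S le" and A: "bmodule A" and s: "s \<in> tgens A (freeB S le)"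
    and G: "finite G" "G \<subseteq> S" "covers S le G s" and e: "e \<in> s"
  defines "N \<equiv> normal_form S le G (tval A s)"
  shows "tens_rel A (freeB S le) (insert e N) N"
proof -
  have N: "N \<in> tgens A (freeB S le)"
    unfolding N_def using G by (intro normal_form_tgens tval_closed[OF A s])
  obtain a D where e_def: "e = (a, D)" by force
  then have a: "a \<in> bcar A" using e s by (auto simp: tgens_iff)
  obtain H where H: "H \<subseteq> G" "D = downset S le H"
    using G(3) e unfolding covers_def e_def by force
  have H_fin: "finite H" "H \<subseteq> S" using G H finite_subset by auto
  have "tens_rel A (freeB S le) ({(a, D)} \<union> N) ((\<lambda>h. (a, pdown S le h)) ` H \<union> N)"
    using tens_rel_downset_right[OF A a H_fin] H(2)
    by (intro tens_rel_Un[OF A bmodule_freeB] trefl[OF N]) auto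
  moreover have "tens_rel A (freeB S le) ((\<lambda>h. (a, pdown S le h)) ` H \<union> N) N"
  proof (rule tens_rel_absorb[OF A bmodule_freeB _ N])
    show "finite ((\<lambda>h. (a, pdown S le h)) ` H)" using H_fin by blast
  next
    fix e' assume "e' \<in> (\<lambda>h. (a, pdown S le h)) ` H"
    then obtain h where h: "h \<in> H" "e' = (a, pdown S le h)" by blast
    then have "h \<in> S" using H_fin by blast
    then have "h \<in> D" using le h H unfolding poset_on_def downset_def by blast
    then have "a \<in> coeffs s h" using e unfolding e_def coeffs_def by force
    then have "bjoin A a (tval A s h) = tval A s h"
      unfolding tval_def using bsum_absorb[OF A coeffs_tgens[OF s]] by blast
    moreover have "(tval A s h, pdown S le h) \<in> N" using h H unfolding N_def normal_form_def by blast
    ultimately show "tens_rel A (freeB S le) (insert e' N) N"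
      using tens_rel_insert_below_left[OF A bmodule_freeB N _ a] h by blast
  qed
  ultimately show ?thesis
    unfolding e_def by (auto intro: ttrans)
qed

lemma tens_rel_normal_form:
  assumes le: "poset_on S le" and A: "bmodule A" and s: "s \<in> tgens A (freeB S le)"
    and G: "finite G" "G \<subseteq> S" "covers S le G s"
  shows "tens_rel A (freeB S le) s (normal_form S le G (tval A s))"
proof (rule tens_rel_antisym)
  let ?N = "normal_form S le G (tval A s)"
  have N: "?N \<in> tgens A (freeB S le)"
    using G by (intro normal_form_tgens tval_closed[OF A s])
  show "tens_rel A (freeB S le) (s \<union> ?N) ?N"
    using tens_rel_insert_generator[OF le A s G]
    by (intro tens_rel_absorb[OF A bmodule_freeB tgensD(1)[OF s] N])
  show "tens_rel A (freeB S le) (?N \<union> s) s"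
    using tens_rel_insert_value[OF le A s] G(2) finite_imageI[OF G(1)]
    by (intro tens_rel_absorb[OF A bmodule_freeB _ s]) (auto simp: normal_form_def)
qed

lemma common_cover:
  assumes "s \<in> tgens A (freeB S le)" "t \<in> tgens A (freeB S le)"
  obtains G where "finite G" "G \<subseteq> S" "covers S le G s" "covers S le G t"
  using covers_exists[OF tgens_Un[OF assms]] by (auto simp: covers_Un)

theorem tens_rel_freeB_iff:
  assumes le: "poset_on S le" and A: "bmodule A"
    and s: "s \<in> tgens A (freeB S le)" and t: "t \<in> tgens A (freeB S le)"
  shows "tens_rel A (freeB S le) s t \<longleftrightarrow> (\<forall>x\<in>S. tval A s x = tval A t x)"
proof
  assume "tens_rel A (freeB S le) s t"
  then show "\<forall>x\<in>S. tval A s x = tval A t x" using tens_rel_tval[OF A, of S le s t] by blast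
next
  assume st: "\<forall>x\<in>S. tval A s x = tval A t x"
  obtain G where G: "finite G" "G \<subseteq> S" "covers S le G s" "covers S le G t"
    using common_cover[OF s t] .
  have "normal_form S le G (tval A s) = normal_form S le G (tval A t)"
    using st G(2) unfolding normal_form_def by (auto intro!: image_cong)
  then show "tens_rel A (freeB S le) s t"
    using tens_rel_normal_form[OF le A s G(1-3)] tens_rel_normal_form[OF le A t G(1,2,4)]
    by (metis tsym ttrans)
qed

section \<open>Zero object, products and coproducts\<close>

lemma biso_inverse:
  assumes "bhom A B f" "bhom B A g"
    and "\<And>x. x \<in> bcar A \<Longrightarrow> g (f x) = x" "\<And>y. y \<in> bcar B \<Longrightarrow> f (g y) = y"
  shows "biso A B f" "biso B A g"
  using assms bij_betw_byWitness[of "bcar A" g f "bcar B"] bij_betw_byWitness[of "bcar B" f g "bcar A"]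
  by (auto simp: biso_def bhom_def)

lemma tens_rel_zero_left:
  assumes A: "bmodule A" and M: "bmodule M" and s: "s \<in> tgens A M"
    and zero: "\<And>a m. (a, m) \<in> s \<Longrightarrow> a = bzero A"
  shows "tens_rel A M s {}"
proof -
  have "tens_rel A M {e} {}" if e: "e \<in> s" for e
  proof -
    obtain a m where "e = (a, m)" by force
    moreover from this have "a = bzero A" "m \<in> bcar M"
      using e zero s by (auto simp: tgens_iff)
    ultimately show ?thesis using tzl by simp
  qed
  then show ?thesis
    using tens_rel_UN[OF A M tgensD(1)[OF s], of "\<lambda>_. {}"] by simp
qed

theorem pres_zero_tensor:
  assumes M: "bmodule M"
  shows "pres_zero TYPE('a) M"
  unfolding pres_zero_def
proof (intro allI impI)
  fix A :: "'a bmod"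
  assume A_triv: "bmodule A \<and> btrivial A"
  then have A: "bmodule A" by simp
  with A_triv have car: "bcar A = {bzero A}"
    using bmodule_zero[OF A] by (auto simp: btrivial_def)
  have "tens_rel A M s {}" if s: "s \<in> tgens A M" for s
  proof (rule tens_rel_zero_left[OF A M s])
    show "a = bzero A" if "(a, m) \<in> s" for a m
      using that s car by (auto simp: tgens_iff)
  qed
  then have "bcar (tensor A M) = {tclass A M {}}"
    unfolding tensor_carrier using tgens_empty tclass_eqI by blast
  then show "btrivial (tensor A M)"
    by (simp add: btrivial_def)
qed

lemma prodm_simps [simp]:
  "bcar (prodm A B) = bcar A \<times> bcar B"
  "bjoin (prodm A B) (x, y) (x', y') = (bjoin A x x', bjoin B y y')"
  "bzero (prodm A B) = (bzero A, bzero B)"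
  by (simp_all add: prodm_def)

lemma bmodule_prodm:
  assumes A: "bmodule A" and B: "bmodule B"
  shows "bmodule (prodm A B)"
  unfolding bmodule_def
  by (auto simp: bmodule_zero[OF A] bmodule_zero[OF B] bmodule_join[OF A] bmodule_join[OF B]
      bmodule_assoc[OF A] bmodule_assoc[OF B] bmodule_idem[OF A] bmodule_idem[OF B]
      bmodule_zero_left[OF A] bmodule_zero_left[OF B] intro: bmodule_comm[OF A] bmodule_comm[OF B])

lemma bhom_fst: "bhom (prodm A B) A fst"
  and bhom_snd: "bhom (prodm A B) B snd"
  by (auto simp: bhom_def)

lemma bhom_in1: "bmodule B \<Longrightarrow> bhom A (prodm A B) (\<lambda>a. (a, bzero B))"
  and bhom_in2: "bmodule A \<Longrightarrow> bhom B (prodm A B) (\<lambda>b. (bzero A, b))"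
  by (auto simp: bhom_def bmodule_zero bmodule_idem)

definition tensor_to_prod ::
    "'a bmod \<Rightarrow> 'b bmod \<Rightarrow> 'm bmod \<Rightarrow> (('a \<times> 'b) \<times> 'm) set set \<Rightarrow> ('a \<times> 'm) set set \<times> ('b \<times> 'm) set set"
  where "tensor_to_prod A B M = (\<lambda>X. (tmap A M fst X, tmap B M snd X))"

definition tensor_from_prod ::
    "'a bmod \<Rightarrow> 'b bmod \<Rightarrow> 'm bmod \<Rightarrow> ('a \<times> 'm) set set \<times> ('b \<times> 'm) set set \<Rightarrow> (('a \<times> 'b) \<times> 'm) set set"
  where "tensor_from_prod A B M = (\<lambda>(X, Y). bjoin (tensor (prodm A B) M)
    (tmap (prodm A B) M (\<lambda>a. (a, bzero B)) X) (tmap (prodm A B) M (\<lambda>b. (bzero A, b)) Y))"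

context
  fixes A :: "'a bmod" and B :: "'b bmod" and M :: "'m bmod"
  assumes A: "bmodule A" and B: "bmodule B" and M: "bmodule M"
begin

abbreviation in1 :: "'a \<Rightarrow> 'a \<times> 'b" where "in1 \<equiv> \<lambda>a. (a, bzero B)"
abbreviation in2 :: "'b \<Rightarrow> 'a \<times> 'b" where "in2 \<equiv> \<lambda>b. (bzero A, b)"

lemma tens_rel_prod_split:
  assumes s: "s \<in> tgens (prodm A B) M"
  shows "tens_rel (prodm A B) M s (lmap in1 (lmap fst s) \<union> lmap in2 (lmap snd s))"
proof -
  let ?r = "\<lambda>e. {(in1 (fst (fst e)), snd e), (in2 (snd (fst e)), snd e)}"
  have "tens_rel (prodm A B) M {e} (?r e)" if e: "e \<in> s" for e
  proof -
    obtain a b m where abm: "e = ((a, b), m)"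
      by (metis prod.exhaust)
    then have ab: "a \<in> bcar A" "b \<in> bcar B" "m \<in> bcar M"
      using e s by (auto simp: tgens_iff)
    then have "tens_rel (prodm A B) M {(bjoin (prodm A B) (in1 a) (in2 b), m)} {(in1 a, m), (in2 b, m)}"
      by (intro tleft) (auto simp: bmodule_zero[OF A] bmodule_zero[OF B])
    then show ?thesis
      using ab abm by (simp add: bmodule_zero_right[OF A] bmodule_zero_left[OF B])
  qed
  then have "tens_rel (prodm A B) M s (\<Union>e\<in>s. ?r e)"
    by (rule tens_rel_UN[OF bmodule_prodm[OF A B] M tgensD(1)[OF s]])
  moreover have "(\<Union>e\<in>s. ?r e) = lmap in1 (lmap fst s) \<union> lmap in2 (lmap snd s)"
    unfolding lmap_def image_image by (auto simp: map_prod_def case_prod_beta)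
  ultimately show ?thesis by simp
qed

lemma lmap_copair_tgens:
  "r1 \<in> tgens A M \<Longrightarrow> r2 \<in> tgens B M \<Longrightarrow> lmap in1 r1 \<union> lmap in2 r2 \<in> tgens (prodm A B) M"
  by (intro tgens_Un lmap_tgens[OF bhom_in1[OF B]] lmap_tgens[OF bhom_in2[OF A]])

lemma tens_rel_lmap_fst_copair:
  assumes r1: "r1 \<in> tgens A M" and r2: "r2 \<in> tgens B M"
  shows "tens_rel A M (lmap fst (lmap in1 r1 \<union> lmap in2 r2)) r1"
proof -
  have "lmap fst (lmap in1 r1 \<union> lmap in2 r2) = r1 \<union> lmap (\<lambda>_. bzero A) r2"
    by (force simp: lmap_def)
  moreover have "tens_rel A M (lmap (\<lambda>_. bzero A) r2) {}"
    using r2 by (intro tens_rel_zero_left[OF A M]) (auto simp: tgens_iff lmap_def bmodule_zero[OF A])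
  ultimately show ?thesis
    using tens_rel_Un[OF A M trefl[OF r1]] by fastforce
qed

lemma tens_rel_lmap_snd_copair:
  assumes r1: "r1 \<in> tgens A M" and r2: "r2 \<in> tgens B M"
  shows "tens_rel B M (lmap snd (lmap in1 r1 \<union> lmap in2 r2)) r2"
proof -
  have "lmap snd (lmap in1 r1 \<union> lmap in2 r2) = r2 \<union> lmap (\<lambda>_. bzero B) r1"
    by (force simp: lmap_def)
  moreover have "tens_rel B M (lmap (\<lambda>_. bzero B) r1) {}"
    using r1 by (intro tens_rel_zero_left[OF B M]) (auto simp: tgens_iff lmap_def bmodule_zero[OF B])
  ultimately show ?thesis
    using tens_rel_Un[OF B M trefl[OF r2]] by fastforce
qed

lemma tensor_to_prod_tclass:
  "s \<in> tgens (prodm A B) M \<Longrightarrow>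
    tensor_to_prod A B M (tclass (prodm A B) M s) = (tclass A M (lmap fst s), tclass B M (lmap snd s))"
  unfolding tensor_to_prod_def by (simp add: tmap_tclass[OF bhom_fst] tmap_tclass[OF bhom_snd])

lemma tensor_from_prod_tclass:
  "r1 \<in> tgens A M \<Longrightarrow> r2 \<in> tgens B M \<Longrightarrow>
    tensor_from_prod A B M (tclass A M r1, tclass B M r2) = tclass (prodm A B) M (lmap in1 r1 \<union> lmap in2 r2)"
  unfolding tensor_from_prod_def
  by (simp add: tmap_tclass[OF bhom_in1[OF B]] tmap_tclass[OF bhom_in2[OF A]]
      tensor_join[OF bmodule_prodm[OF A B] M] lmap_tgens[OF bhom_in1[OF B]] lmap_tgens[OF bhom_in2[OF A]])

lemma bhom_tensor_to_prod: "bhom (tensor (prodm A B) M) (prodm (tensor A M) (tensor B M)) (tensor_to_prod A B M)"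
  using bhom_tmap[OF bmodule_prodm[OF A B] A M bhom_fst] bhom_tmap[OF bmodule_prodm[OF A B] B M bhom_snd]
  unfolding bhom_def tensor_to_prod_def by auto

lemma bhom_tensor_from_prod: "bhom (prodm (tensor A M) (tensor B M)) (tensor (prodm A B) M) (tensor_from_prod A B M)"
  unfolding bhom_def
proof (intro conjI ballI)
  fix x y assume "x \<in> bcar (prodm (tensor A M) (tensor B M))" "y \<in> bcar (prodm (tensor A M) (tensor B M))"
  then obtain r1 r2 q1 q2 where r: "r1 \<in> tgens A M" "r2 \<in> tgens B M" "x = (tclass A M r1, tclass B M r2)"
    and q: "q1 \<in> tgens A M" "q2 \<in> tgens B M" "y = (tclass A M q1, tclass B M q2)"
    by (auto simp: tensor_carrier)
  have "lmap in1 (r1 \<union> q1) \<union> lmap in2 (r2 \<union> q2) = (lmap in1 r1 \<union> lmap in2 r2) \<union> (lmap in1 q1 \<union> lmap in2 q2)"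
    by auto
  then show "tensor_from_prod A B M (bjoin (prodm (tensor A M) (tensor B M)) x y) =
      bjoin (tensor (prodm A B) M) (tensor_from_prod A B M x) (tensor_from_prod A B M y)"
    using r q
    by (simp add: tensor_join[OF A M] tensor_join[OF B M] tensor_join[OF bmodule_prodm[OF A B] M]
        tensor_from_prod_tclass lmap_copair_tgens tgens_Un)
qed (auto simp: tensor_carrier tensor_zero tensor_from_prod_tclass lmap_copair_tgens)

lemma tensor_from_to_prod:
  assumes "X \<in> bcar (tensor (prodm A B) M)"
  shows "tensor_from_prod A B M (tensor_to_prod A B M X) = X"
proof -
  obtain s where s: "s \<in> tgens (prodm A B) M" "X = tclass (prodm A B) M s"
    using assms by (auto simp: tensor_carrier)
  have "tclass (prodm A B) M (lmap in1 (lmap fst s) \<union> lmap in2 (lmap snd s)) = X"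
    unfolding s(2) by (rule tclass_eqI[OF tsym[OF tens_rel_prod_split[OF s(1)]]])
  with s show ?thesis
    by (simp add: tensor_to_prod_tclass tensor_from_prod_tclass
        lmap_tgens[OF bhom_fst] lmap_tgens[OF bhom_snd])
qed

lemma tensor_to_from_prod:
  assumes "Y \<in> bcar (prodm (tensor A M) (tensor B M))"
  shows "tensor_to_prod A B M (tensor_from_prod A B M Y) = Y"
proof -
  obtain r1 r2 where r: "r1 \<in> tgens A M" "r2 \<in> tgens B M" "Y = (tclass A M r1, tclass B M r2)"
    using assms by (auto simp: tensor_carrier)
  then have "tensor_to_prod A B M (tensor_from_prod A B M Y) =
      (tclass A M (lmap fst (lmap in1 r1 \<union> lmap in2 r2)), tclass B M (lmap snd (lmap in1 r1 \<union> lmap in2 r2)))"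
    by (simp only: tensor_from_prod_tclass tensor_to_prod_tclass lmap_copair_tgens)
  then show ?thesis
    unfolding r(3) tclass_eqI[OF tens_rel_lmap_fst_copair[OF r(1,2)]] tclass_eqI[OF tens_rel_lmap_snd_copair[OF r(1,2)]] .
qed

lemma biso_tensor_prodm:
  "biso (tensor (prodm A B) M) (prodm (tensor A M) (tensor B M)) (\<lambda>X. (tmap A M fst X, tmap B M snd X))"
  using biso_inverse(1)[OF bhom_tensor_to_prod bhom_tensor_from_prod tensor_from_to_prod tensor_to_from_prod]
  unfolding tensor_to_prod_def .

lemma biso_prodm_tensor:
  "biso (prodm (tensor A M) (tensor B M)) (tensor (prodm A B) M)
     (\<lambda>(X, Y). bjoin (tensor (prodm A B) M) (tmap (prodm A B) M in1 X) (tmap (prodm A B) M in2 Y))"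
  using biso_inverse(2)[OF bhom_tensor_to_prod bhom_tensor_from_prod tensor_from_to_prod tensor_to_from_prod]
  unfolding tensor_from_prod_def .

end

theorem pres_products_tensor: "bmodule M \<Longrightarrow> pres_products TYPE('a) TYPE('b) M"
  unfolding pres_products_def using biso_tensor_prodm by blast

theorem pres_coproducts_tensor: "bmodule M \<Longrightarrow> pres_coproducts TYPE('a) TYPE('b) M"
  unfolding pres_coproducts_def using biso_prodm_tensor by blast

section \<open>Equalizers\<close>

lemma eqsub_simps [simp]:
  "bcar (eqsub A f g) = {x \<in> bcar A. f x = g x}"
  "bjoin (eqsub A f g) = bjoin A"
  "bzero (eqsub A f g) = bzero A"
  by (simp_all add: eqsub_def)

lemma bmodule_eqsub:
  assumes "bmodule A" "bhom A B f" "bhom A B g"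
  shows "bmodule (eqsub A f g)"
  using assms unfolding bmodule_def bhom_def by auto

lemma bhom_id_eqsub: "bhom (eqsub A f g) A id"
  by (simp add: bhom_def)

lemma bsum_eqsub:
  assumes A: "bmodule A" and f: "bhom A B f" and g: "bhom A B g"
    and "finite X" "X \<subseteq> bcar (eqsub A f g)"
  shows "bsum (eqsub A f g) X = bsum A X"
  using assms(4,5)
proof (induction X rule: finite_induct)
  case (insert x X)
  then have "X \<subseteq> bcar A" "x \<in> bcar A" by auto
  with insert show ?case
    using bsum_insert[OF bmodule_eqsub[OF A f g] insert.hyps(1)] bsum_insert[OF A insert.hyps(1)]
    by auto
qed simp

lemma tval_eqsub:
  assumes "bmodule A" "bhom A B f" "bhom A B g" "s \<in> tgens (eqsub A f g) M"
  shows "tval (eqsub A f g) s x = tval A s x"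
  unfolding tval_def using bsum_eqsub[OF assms(1-3) coeffs_tgens[OF assms(4)]] .

lemma tgens_eqsub: "s \<in> tgens (eqsub A f g) M \<longleftrightarrow> s \<in> tgens A M \<and> (\<forall>(a, m)\<in>s. f a = g a)"
  by (auto simp: tgens_iff)

context
  fixes A :: "'a bmod" and B :: "'b bmod" and f g :: "'a \<Rightarrow> 'b"
    and S :: "'s set" and le :: "'s \<Rightarrow> 's \<Rightarrow> bool"
  assumes A: "bmodule A" and B: "bmodule B" and f: "bhom A B f" and g: "bhom A B g"
    and le: "poset_on S le"
begin

lemma tmap_id_eqsub_tclass:
  "s \<in> tgens (eqsub A f g) (freeB S le) \<Longrightarrow>
    tmap A (freeB S le) id (tclass (eqsub A f g) (freeB S le) s) = tclass A (freeB S le) s"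
  using tmap_tclass[OF bhom_id_eqsub] by simp

lemma bhom_tmap_id_eqsub:
  "bhom (tensor (eqsub A f g) (freeB S le))
     (eqsub (tensor A (freeB S le)) (tmap B (freeB S le) f) (tmap B (freeB S le) g))
     (tmap A (freeB S le) id)"
  unfolding bhom_def
proof (intro conjI ballI)
  fix X assume "X \<in> bcar (tensor (eqsub A f g) (freeB S le))"
  then obtain s where s: "s \<in> tgens (eqsub A f g) (freeB S le)" "X = tclass (eqsub A f g) (freeB S le) s"
    by (auto simp: tensor_carrier)
  then have "lmap f s = lmap g s"
    unfolding tgens_eqsub lmap_def by (force simp: image_iff)
  with s show "tmap A (freeB S le) id X \<in>
      bcar (eqsub (tensor A (freeB S le)) (tmap B (freeB S le) f) (tmap B (freeB S le) g))"
    by (auto simp: tensor_carrier tmap_id_eqsub_tclass tgens_eqsub tmap_tclass[OF f] tmap_tclass[OF g])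
next
  fix X Y assume "X \<in> bcar (tensor (eqsub A f g) (freeB S le))" "Y \<in> bcar (tensor (eqsub A f g) (freeB S le))"
  then obtain s t where "s \<in> tgens (eqsub A f g) (freeB S le)" "X = tclass (eqsub A f g) (freeB S le) s"
    "t \<in> tgens (eqsub A f g) (freeB S le)" "Y = tclass (eqsub A f g) (freeB S le) t"
    by (auto simp: tensor_carrier)
  then show "tmap A (freeB S le) id (bjoin (tensor (eqsub A f g) (freeB S le)) X Y) =
      bjoin (eqsub (tensor A (freeB S le)) (tmap B (freeB S le) f) (tmap B (freeB S le) g))
        (tmap A (freeB S le) id X) (tmap A (freeB S le) id Y)"
    by (simp add: tensor_join[OF bmodule_eqsub[OF A f g] bmodule_freeB] tensor_join[OF A bmodule_freeB]
        tmap_id_eqsub_tclass tgens_Un) (auto simp: tgens_eqsub tensor_join[OF A bmodule_freeB])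
qed (simp add: tensor_zero tmap_id_eqsub_tclass)

lemma inj_on_tmap_id_eqsub:
  "inj_on (tmap A (freeB S le) id) (bcar (tensor (eqsub A f g) (freeB S le)))"
proof (rule inj_onI)
  fix X Y
  assume "X \<in> bcar (tensor (eqsub A f g) (freeB S le))" "Y \<in> bcar (tensor (eqsub A f g) (freeB S le))"
    and XY: "tmap A (freeB S le) id X = tmap A (freeB S le) id Y"
  then obtain s t where s: "s \<in> tgens (eqsub A f g) (freeB S le)" "X = tclass (eqsub A f g) (freeB S le) s"
    and t: "t \<in> tgens (eqsub A f g) (freeB S le)" "Y = tclass (eqsub A f g) (freeB S le) t"
    by (auto simp: tensor_carrier)
  then have "tens_rel A (freeB S le) s t"
    using XY by (simp add: tmap_id_eqsub_tclass tclass_eq_iff tgens_eqsub)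
  then have "\<forall>x\<in>S. tval A s x = tval A t x"
    using tens_rel_freeB_iff[OF le A] s t by (simp add: tgens_eqsub)
  then have "tens_rel (eqsub A f g) (freeB S le) s t"
    using tens_rel_freeB_iff[OF le bmodule_eqsub[OF A f g] s(1) t(1)]
    by (simp add: tval_eqsub[OF A f g s(1)] tval_eqsub[OF A f g t(1)])
  then show "X = Y"
    using s t by (simp add: tclass_eqI)
qed

lemma tmap_id_eqsub_surj:
  "tmap A (freeB S le) id ` bcar (tensor (eqsub A f g) (freeB S le)) =
     bcar (eqsub (tensor A (freeB S le)) (tmap B (freeB S le) f) (tmap B (freeB S le) g))"
proof
  show "tmap A (freeB S le) id ` bcar (tensor (eqsub A f g) (freeB S le)) \<subseteq>
      bcar (eqsub (tensor A (freeB S le)) (tmap B (freeB S le) f) (tmap B (freeB S le) g))"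
    using bhom_tmap_id_eqsub by (auto simp: bhom_def)
next
  show "bcar (eqsub (tensor A (freeB S le)) (tmap B (freeB S le) f) (tmap B (freeB S le) g)) \<subseteq>
      tmap A (freeB S le) id ` bcar (tensor (eqsub A f g) (freeB S le))"
  proof
    fix X
    assume "X \<in> bcar (eqsub (tensor A (freeB S le)) (tmap B (freeB S le) f) (tmap B (freeB S le) g))"
    then obtain s where s: "s \<in> tgens A (freeB S le)" "X = tclass A (freeB S le) s"
      and fg: "tclass B (freeB S le) (lmap f s) = tclass B (freeB S le) (lmap g s)"
      by (auto simp: tensor_carrier tmap_tclass[OF f] tmap_tclass[OF g])
    have fg_tval: "f (tval A s x) = g (tval A s x)" for x
      using fg tens_rel_tval[OF B, of S le "lmap f s" "lmap g s" x]
        tval_lmap[OF A B f s(1)] tval_lmap[OF A B g s(1)]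
      by (simp add: tclass_eq_iff lmap_tgens[OF g s(1)])
    obtain G where G: "finite G" "G \<subseteq> S" "covers S le G s"
      using covers_exists[OF s(1)] by blast
    let ?N = "normal_form S le G (tval A s)"
    have N: "?N \<in> tgens (eqsub A f g) (freeB S le)"
      using G fg_tval tval_closed[OF A s(1)]
      by (intro normal_form_tgens) auto
    have "X = tmap A (freeB S le) id (tclass (eqsub A f g) (freeB S le) ?N)"
      using s(2) tclass_eqI[OF tens_rel_normal_form[OF le A s(1) G]] by (simp add: tmap_id_eqsub_tclass[OF N])
    moreover have "tclass (eqsub A f g) (freeB S le) ?N \<in> bcar (tensor (eqsub A f g) (freeB S le))"
      using N by (simp add: tensor_carrier)
    ultimately show "X \<in> tmap A (freeB S le) id ` bcar (tensor (eqsub A f g) (freeB S le))"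
      by blast
  qed
qed

lemma biso_tmap_id_eqsub:
  "biso (tensor (eqsub A f g) (freeB S le))
     (eqsub (tensor A (freeB S le)) (tmap B (freeB S le) f) (tmap B (freeB S le) g))
     (tmap A (freeB S le) id)"
  unfolding biso_def bij_betw_def
  using bhom_tmap_id_eqsub inj_on_tmap_id_eqsub tmap_id_eqsub_surj by blast

end

theorem pres_equalizers_freeB: "poset_on S le \<Longrightarrow> pres_equalizers TYPE('a) TYPE('b) (freeB S le)"
  unfolding pres_equalizers_def using biso_tmap_id_eqsub by blast

section \<open>Coequalizers\<close>

lemma bmodule_surj_image:
  assumes B: "bmodule B" and car: "bcar C = h ` bcar B"
    and join: "\<And>x y. x \<in> bcar B \<Longrightarrow> y \<in> bcar B \<Longrightarrow> bjoin C (h x) (h y) = h (bjoin B x y)"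
    and zero: "bzero C = h (bzero B)"
  shows "bmodule C"
  unfolding bmodule_def car zero ball_simps
proof (intro conjI ballI)
  fix x y z assume xyz: "x \<in> bcar B" "y \<in> bcar B" "z \<in> bcar B"
  show "bjoin C (h x) (h y) \<in> h ` bcar B"
    using xyz by (simp add: join bmodule_join[OF B])
  show "bjoin C (bjoin C (h x) (h y)) (h z) = bjoin C (h x) (bjoin C (h y) (h z))"
    using xyz by (simp add: join bmodule_join[OF B] bmodule_assoc[OF B])
  show "bjoin C (h x) (h y) = bjoin C (h y) (h x)"
    using xyz join bmodule_comm[OF B] by metis
next
  fix x assume "x \<in> bcar B"
  then show "bjoin C (h x) (h x) = h x" "bjoin C (h (bzero B)) (h x) = h x"
    by (simp_all add: join bmodule_zero[OF B] bmodule_idem[OF B] bmodule_zero_left[OF B])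
qed (simp add: bmodule_zero[OF B])

lemma coeq_simps [simp]:
  "bcar (coeq A B f g) = coeq_proj A B f g ` bcar B"
  "bzero (coeq A B f g) = coeq_proj A B f g (bzero B)"
  by (simp_all add: coeq_def)

lemma coeq_proj_eqI: "coeq_rel A B f g x y \<Longrightarrow> coeq_proj A B f g x = coeq_proj A B f g y"
  unfolding coeq_proj_def by (auto intro: ctrans csym)

context
  fixes A :: "'a bmod" and B :: "'b bmod" and f g :: "'a \<Rightarrow> 'b"
  assumes B: "bmodule B" and f: "bhom A B f" and g: "bhom A B g"
begin

lemma coeq_rel_carrier: "coeq_rel A B f g x y \<Longrightarrow> x \<in> bcar B \<and> y \<in> bcar B"
  by (induction rule: coeq_rel.induct) (auto simp: bmodule_join[OF B] bhom_closed[OF f] bhom_closed[OF g])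

lemma coeq_proj_eq_iff:
  assumes "y \<in> bcar B"
  shows "coeq_proj A B f g x = coeq_proj A B f g y \<longleftrightarrow> coeq_rel A B f g x y"
proof
  assume "coeq_proj A B f g x = coeq_proj A B f g y"
  then show "coeq_rel A B f g x y"
    using crefl[OF assms, of A f g] unfolding coeq_proj_def by blast
qed (rule coeq_proj_eqI)

lemma coeq_rel_join:
  assumes xx': "coeq_rel A B f g x x'" and yy': "coeq_rel A B f g y y'"
  shows "coeq_rel A B f g (bjoin B x y) (bjoin B x' y')"
proof -
  have car: "x' \<in> bcar B" "y \<in> bcar B" "y' \<in> bcar B"
    using coeq_rel_carrier[OF xx'] coeq_rel_carrier[OF yy'] by auto
  have "coeq_rel A B f g (bjoin B y x') (bjoin B y' x')"
    by (rule cjoin[OF yy' car(1)])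
  then have "coeq_rel A B f g (bjoin B x' y) (bjoin B x' y')"
    using bmodule_comm[OF B car(1,2)] bmodule_comm[OF B car(1,3)] by simp
  with cjoin[OF xx' car(2)] show ?thesis
    by (rule ctrans)
qed

lemma coeq_join:
  assumes "b \<in> bcar B" "b' \<in> bcar B"
  shows "bjoin (coeq A B f g) (coeq_proj A B f g b) (coeq_proj A B f g b') = coeq_proj A B f g (bjoin B b b')"
proof -
  have "coeq_rel A B f g (bjoin B b b') u \<longleftrightarrow>
      (\<exists>x y. coeq_rel A B f g b x \<and> coeq_rel A B f g b' y \<and> coeq_rel A B f g (bjoin B x y) u)" for u
  proof
    assume "coeq_rel A B f g (bjoin B b b') u"
    with assms show "\<exists>x y. coeq_rel A B f g b x \<and> coeq_rel A B f g b' y \<and> coeq_rel A B f g (bjoin B x y) u"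
      by (blast intro: crefl)
  next
    assume "\<exists>x y. coeq_rel A B f g b x \<and> coeq_rel A B f g b' y \<and> coeq_rel A B f g (bjoin B x y) u"
    then show "coeq_rel A B f g (bjoin B b b') u"
      by (blast intro: coeq_rel_join ctrans)
  qed
  then show ?thesis
    by (simp add: coeq_def coeq_proj_def)
qed

lemma bmodule_coeq: "bmodule (coeq A B f g)"
  by (rule bmodule_surj_image[OF B]) (simp_all add: coeq_join)

lemma bhom_coeq_proj: "bhom B (coeq A B f g) (coeq_proj A B f g)"
  unfolding bhom_def by (simp add: coeq_join)

end

lemma lmap_coeq_proj_eq:
  assumes "r \<in> tgens A M"
  shows "lmap (coeq_proj A B f g) (lmap f r) = lmap (coeq_proj A B f g) (lmap g r)"
proof -
  have "coeq_proj A B f g (f a) = coeq_proj A B f g (g a)" if "(a, m) \<in> r" for a m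
    using that assms by (intro coeq_proj_eqI cbase) (auto simp: tgens_iff)
  then show ?thesis
    unfolding lmap_def image_image by (intro image_cong) (auto simp: map_prod_def)
qed

text \<open>The comparison map \<open>coeq (f \<otimes> M) (g \<otimes> M) \<rightarrow> coeq f g \<otimes> M\<close>: all elements of a class \<open>Z\<close> have
  the same image under \<open>coeq_proj \<otimes> M\<close>, and the union picks out this common image.\<close>
definition coeq_compare ::
    "'a bmod \<Rightarrow> 'b bmod \<Rightarrow> ('a \<Rightarrow> 'b) \<Rightarrow> ('a \<Rightarrow> 'b) \<Rightarrow> 'm bmod \<Rightarrow> ('b \<times> 'm) set set set \<Rightarrow> ('b set \<times> 'm) set set"
  where "coeq_compare A B f g M = (\<lambda>Z. \<Union>X\<in>Z. tmap (coeq A B f g) M (coeq_proj A B f g) X)"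

context
  fixes A :: "'a bmod" and B :: "'b bmod" and f g :: "'a \<Rightarrow> 'b" and M :: "'m bmod"
  assumes A: "bmodule A" and B: "bmodule B" and f: "bhom A B f" and g: "bhom A B g"
    and M: "bmodule M"
begin

lemma coeq_rel_tensor_singleton:
  assumes m: "m \<in> bcar M"
  shows "coeq_rel A B f g b b' \<Longrightarrow>
    coeq_rel (tensor A M) (tensor B M) (tmap B M f) (tmap B M g) (tclass B M {(b, m)}) (tclass B M {(b', m)})"
proof (induction rule: coeq_rel.induct)
  case (crefl b)
  then show ?case using m by (intro coeq_rel.crefl) (simp add: tensor_carrier)
next
  case (csym x y)
  from csym.IH show ?case by (rule coeq_rel.csym)
next
  case (ctrans x y z)
  from ctrans.IH show ?case by (rule coeq_rel.ctrans)
next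
  case (cjoin x y z)
  have car: "x \<in> bcar B" "y \<in> bcar B" using coeq_rel_carrier[OF B f g cjoin.hyps(1)] by auto
  have "tclass B M {(bjoin B u z, m)} = bjoin (tensor B M) (tclass B M {(u, m)}) (tclass B M {(z, m)})"
    if "u \<in> bcar B" for u
    using tclass_eqI[OF tleft[OF that cjoin.hyps(2) m]] that cjoin.hyps(2) m
    by (simp add: tensor_join[OF B M] insert_commute)
  moreover have "tclass B M {(z, m)} \<in> bcar (tensor B M)"
    using cjoin.hyps(2) m by (simp add: tensor_carrier)
  ultimately show ?case
    using coeq_rel.cjoin[OF cjoin.IH] car by simp
next
  case (cbase a)
  then have "{(a, m)} \<in> tgens A M" using m by simp
  then show ?case
    using coeq_rel.cbase[of "tclass A M {(a, m)}" "tensor A M" "tensor B M" "tmap B M f" "tmap B M g"]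
    by (simp add: tensor_carrier tmap_tclass[OF f] tmap_tclass[OF g])
qed

lemma coeq_rel_tensor_image:
  assumes "finite G" "\<And>x. x \<in> G \<Longrightarrow> m x \<in> bcar M" "\<And>x. x \<in> G \<Longrightarrow> coeq_rel A B f g (v x) (w x)"
  shows "coeq_rel (tensor A M) (tensor B M) (tmap B M f) (tmap B M g)
    (tclass B M ((\<lambda>x. (v x, m x)) ` G)) (tclass B M ((\<lambda>x. (w x, m x)) ` G))"
  using assms
proof (induction G rule: finite_induct)
  case empty
  show ?case by (simp add: coeq_rel.crefl tensor_carrier)
next
  case (insert x G)
  have split: "tclass B M ((\<lambda>x. (u x, m x)) ` insert x G) =
      bjoin (tensor B M) (tclass B M {(u x, m x)}) (tclass B M ((\<lambda>x. (u x, m x)) ` G))"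
    if "\<And>y. y \<in> insert x G \<Longrightarrow> u y \<in> bcar B" for u
    using that insert.hyps(1) insert.prems(1) by (simp add: tensor_join[OF B M] tgens_iff image_subset_iff)
  have "coeq_rel (tensor A M) (tensor B M) (tmap B M f) (tmap B M g)
      (bjoin (tensor B M) (tclass B M {(v x, m x)}) (tclass B M ((\<lambda>x. (v x, m x)) ` G)))
      (bjoin (tensor B M) (tclass B M {(w x, m x)}) (tclass B M ((\<lambda>x. (w x, m x)) ` G)))"
    using insert
    by (intro coeq_rel_join[OF bmodule_tensor[OF B M] bhom_tmap[OF A B M f] bhom_tmap[OF A B M g]]
        coeq_rel_tensor_singleton) auto
  moreover have "\<And>y. y \<in> insert x G \<Longrightarrow> v y \<in> bcar B \<and> w y \<in> bcar B"
    using coeq_rel_carrier[OF B f g] insert.prems(2) by blast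
  ultimately show ?case
    using split[of v] split[of w] by simp
qed

lemma tmap_coeq_proj_tclass:
  "s \<in> tgens B M \<Longrightarrow>
    tmap (coeq A B f g) M (coeq_proj A B f g) (tclass B M s) = tclass (coeq A B f g) M (lmap (coeq_proj A B f g) s)"
  by (rule tmap_tclass[OF bhom_coeq_proj[OF B f g]])

lemma bhom_tmap_coeq_proj: "bhom (tensor B M) (tensor (coeq A B f g) M) (tmap (coeq A B f g) M (coeq_proj A B f g))"
  by (rule bhom_tmap[OF B bmodule_coeq[OF B f g] M bhom_coeq_proj[OF B f g]])

lemma tmap_coeq_proj_eqI:
  "coeq_rel (tensor A M) (tensor B M) (tmap B M f) (tmap B M g) X Y \<Longrightarrow>
    tmap (coeq A B f g) M (coeq_proj A B f g) X = tmap (coeq A B f g) M (coeq_proj A B f g) Y"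
proof (induction rule: coeq_rel.induct)
  case (cjoin X Y Z)
  then show ?case
    using coeq_rel_carrier[OF bmodule_tensor[OF B M] bhom_tmap[OF A B M f] bhom_tmap[OF A B M g] cjoin.hyps(1)]
    by (simp add: bhom_join[OF bhom_tmap_coeq_proj])
next
  case (cbase X)
  then obtain r where r: "r \<in> tgens A M" "X = tclass A M r"
    by (auto simp: tensor_carrier)
  then show ?case
    using lmap_coeq_proj_eq[OF r(1), of B f g]
    by (simp add: tmap_tclass[OF f] tmap_tclass[OF g] tmap_coeq_proj_tclass lmap_tgens[OF f] lmap_tgens[OF g])
qed auto

lemma coeq_compare_coeq_proj:
  assumes "X \<in> bcar (tensor B M)"
  shows "coeq_compare A B f g M (coeq_proj (tensor A M) (tensor B M) (tmap B M f) (tmap B M g) X) =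
    tmap (coeq A B f g) M (coeq_proj A B f g) X"
proof -
  have "X \<in> coeq_proj (tensor A M) (tensor B M) (tmap B M f) (tmap B M g) X"
    unfolding coeq_proj_def by (rule CollectI crefl[OF assms])+
  moreover have "tmap (coeq A B f g) M (coeq_proj A B f g) Y = tmap (coeq A B f g) M (coeq_proj A B f g) X"
    if "Y \<in> coeq_proj (tensor A M) (tensor B M) (tmap B M f) (tmap B M g) X" for Y
    using that unfolding coeq_proj_def[of "tensor A M"] by (simp add: tmap_coeq_proj_eqI[symmetric])
  ultimately show ?thesis
    unfolding coeq_compare_def by (intro SUP_eq_const) blast+
qed

lemma bhom_coeq_compare:
  "bhom (coeq (tensor A M) (tensor B M) (tmap B M f) (tmap B M g)) (tensor (coeq A B f g) M) (coeq_compare A B f g M)"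
proof -
  have T: "bmodule (tensor B M)" "bhom (tensor A M) (tensor B M) (tmap B M f)" "bhom (tensor A M) (tensor B M) (tmap B M g)"
    using bmodule_tensor[OF B M] bhom_tmap[OF A B M f] bhom_tmap[OF A B M g] .
  show ?thesis
    unfolding bhom_def
    using bhomD[OF bhom_tmap_coeq_proj] bmodule_join[OF T(1)] bmodule_zero[OF T(1)]
    by (auto simp: coeq_compare_coeq_proj coeq_join[OF T])
qed

lemma coeq_compare_surj:
  "coeq_compare A B f g M ` bcar (coeq (tensor A M) (tensor B M) (tmap B M f) (tmap B M g)) = bcar (tensor (coeq A B f g) M)"
proof
  show "coeq_compare A B f g M ` bcar (coeq (tensor A M) (tensor B M) (tmap B M f) (tmap B M g)) \<subseteq> bcar (tensor (coeq A B f g) M)"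
    using bhom_coeq_compare by (auto simp: bhom_def)
next
  show "bcar (tensor (coeq A B f g) M) \<subseteq> coeq_compare A B f g M ` bcar (coeq (tensor A M) (tensor B M) (tmap B M f) (tmap B M g))"
  proof
    fix Y assume "Y \<in> bcar (tensor (coeq A B f g) M)"
    then obtain r where r: "r \<in> tgens (coeq A B f g) M" "Y = tclass (coeq A B f g) M r"
      by (auto simp: tensor_carrier)
    let ?lift = "inv_into (bcar B) (coeq_proj A B f g)"
    have lift: "?lift q \<in> bcar B \<and> coeq_proj A B f g (?lift q) = q" if "q \<in> bcar (coeq A B f g)" for q
      using inv_into_into[of q "coeq_proj A B f g" "bcar B"] f_inv_into_f[of q "coeq_proj A B f g" "bcar B"] that
      by simp
    have r_car: "fst p \<in> bcar (coeq A B f g) \<and> snd p \<in> bcar M" if "p \<in> r" for p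
      using that r(1) by (auto simp: tgens_iff)
    have s: "lmap ?lift r \<in> tgens B M"
      using r(1) lift r_car unfolding tgens_iff lmap_def by (auto simp: map_prod_def)
    have "lmap (coeq_proj A B f g) (lmap ?lift r) = id ` r"
      unfolding lmap_def image_image using lift r_car by (intro image_cong) (auto simp: map_prod_def)
    then have "Y = coeq_compare A B f g M (coeq_proj (tensor A M) (tensor B M) (tmap B M f) (tmap B M g) (tclass B M (lmap ?lift r)))"
      using r(2) s by (simp add: coeq_compare_coeq_proj tensor_carrier tmap_coeq_proj_tclass)
    then show "Y \<in> coeq_compare A B f g M ` bcar (coeq (tensor A M) (tensor B M) (tmap B M f) (tmap B M g))"
      using s by (simp add: tensor_carrier)
  qed
qed

end

lemma coeq_rel_tensor_freeB:
  assumes le: "poset_on S le" and A: "bmodule A" and B: "bmodule B" and f: "bhom A B f" and g: "bhom A B g"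
    and s: "s \<in> tgens B (freeB S le)" and t: "t \<in> tgens B (freeB S le)"
    and st: "\<And>x. x \<in> S \<Longrightarrow> coeq_rel A B f g (tval B s x) (tval B t x)"
  shows "coeq_rel (tensor A (freeB S le)) (tensor B (freeB S le)) (tmap B (freeB S le) f) (tmap B (freeB S le) g)
    (tclass B (freeB S le) s) (tclass B (freeB S le) t)"
proof -
  obtain G where G: "finite G" "G \<subseteq> S" "covers S le G s" "covers S le G t"
    using common_cover[OF s t] .
  have "coeq_rel (tensor A (freeB S le)) (tensor B (freeB S le)) (tmap B (freeB S le) f) (tmap B (freeB S le) g)
      (tclass B (freeB S le) (normal_form S le G (tval B s))) (tclass B (freeB S le) (normal_form S le G (tval B t)))"
    unfolding normal_form_def
    using G st by (intro coeq_rel_tensor_image[OF A B f g bmodule_freeB]) (auto intro!: pdown_in_freeB)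
  then show ?thesis
    using tclass_eqI[OF tens_rel_normal_form[OF le B s G(1-3)]]
      tclass_eqI[OF tens_rel_normal_form[OF le B t G(1,2,4)]]
    by simp
qed

lemma inj_on_coeq_compare_freeB:
  assumes le: "poset_on S le" and A: "bmodule A" and B: "bmodule B" and f: "bhom A B f" and g: "bhom A B g"
  shows "inj_on (coeq_compare A B f g (freeB S le))
    (bcar (coeq (tensor A (freeB S le)) (tensor B (freeB S le)) (tmap B (freeB S le) f) (tmap B (freeB S le) g)))"
proof (rule inj_onI)
  let ?M = "freeB S le"
  let ?tproj = "coeq_proj (tensor A ?M) (tensor B ?M) (tmap B ?M f) (tmap B ?M g)"
  have Q: "bmodule (coeq A B f g)" "bhom B (coeq A B f g) (coeq_proj A B f g)"
    using bmodule_coeq[OF B f g] bhom_coeq_proj[OF B f g] .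
  fix Z1 Z2
  assume "Z1 \<in> bcar (coeq (tensor A ?M) (tensor B ?M) (tmap B ?M f) (tmap B ?M g))"
    and "Z2 \<in> bcar (coeq (tensor A ?M) (tensor B ?M) (tmap B ?M f) (tmap B ?M g))"
    and eq: "coeq_compare A B f g ?M Z1 = coeq_compare A B f g ?M Z2"
  then obtain s t where s: "s \<in> tgens B ?M" "Z1 = ?tproj (tclass B ?M s)"
    and t: "t \<in> tgens B ?M" "Z2 = ?tproj (tclass B ?M t)"
    by (auto simp: tensor_carrier)
  have "tclass (coeq A B f g) ?M (lmap (coeq_proj A B f g) s) = tclass (coeq A B f g) ?M (lmap (coeq_proj A B f g) t)"
    using eq s t
    by (simp add: coeq_compare_coeq_proj[OF A B f g bmodule_freeB] tmap_coeq_proj_tclass[OF A B f g bmodule_freeB]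
        tensor_carrier)
  then have "\<forall>x\<in>S. coeq_proj A B f g (tval B s x) = coeq_proj A B f g (tval B t x)"
    using tens_rel_freeB_iff[OF le Q(1) lmap_tgens[OF Q(2) s(1)] lmap_tgens[OF Q(2) t(1)]]
    by (simp add: tclass_eq_iff lmap_tgens[OF Q(2) t(1)] tval_lmap[OF B Q s(1)] tval_lmap[OF B Q t(1)])
  then have "\<And>x. x \<in> S \<Longrightarrow> coeq_rel A B f g (tval B s x) (tval B t x)"
    using coeq_proj_eq_iff[OF B f g tval_closed[OF B t(1)]] by blast
  then have "coeq_rel (tensor A ?M) (tensor B ?M) (tmap B ?M f) (tmap B ?M g) (tclass B ?M s) (tclass B ?M t)"
    by (rule coeq_rel_tensor_freeB[OF le A B f g s(1) t(1)])
  then show "Z1 = Z2"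
    using s(2) t(2) by (simp add: coeq_proj_eqI)
qed

lemma biso_coeq_compare_freeB:
  assumes "poset_on S le" "bmodule A" "bmodule B" "bhom A B f" "bhom A B g"
  shows "biso (coeq (tensor A (freeB S le)) (tensor B (freeB S le)) (tmap B (freeB S le) f) (tmap B (freeB S le) g))
    (tensor (coeq A B f g) (freeB S le)) (coeq_compare A B f g (freeB S le))"
  unfolding biso_def bij_betw_def
  using bhom_coeq_compare[OF assms(2-5) bmodule_freeB] coeq_compare_surj[OF assms(2-5) bmodule_freeB]
    inj_on_coeq_compare_freeB[OF assms]
  by blast

theorem pres_coequalizers_freeB: "poset_on S le \<Longrightarrow> pres_coequalizers TYPE('a) TYPE('b) (freeB S le)"
  unfolding pres_coequalizers_def using biso_coeq_compare_freeB unfolding coeq_compare_def by blast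

theorem mainTheorem10:
  fixes S :: "'s set" and le :: "'s \<Rightarrow> 's \<Rightarrow> bool"
  assumes "poset_on S le"
  shows "bflat TYPE('a) TYPE('b) (freeB S le)"
  unfolding bflat_def
  using bmodule_freeB pres_zero_tensor pres_products_tensor pres_coproducts_tensor
    pres_equalizers_freeB[OF assms] pres_coequalizers_freeB[OF assms]
  by blast

end
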